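(* For every integer $d\ge 3$, the space $\mathcal O_d$ is homotopy equivalent to the $2$-sphere $S^2$.
   Context: A polynomial map is a map $\phi:\mathbb R\to\mathbb R^3$ whose three component functions are real polynomials. A polynomial knot is a polynomial map which is a smooth embedding, i.e. $\phi$ is injective and $\phi'(t)\neq 0$ for all $t\in\mathbb R$. For an integer $d\ge 2$, $\mathcal A_d$ denotes the set of polynomial maps $t\mapsto (f(t),g(t),h(t))$ with $\deg f\le d-2$, $\deg g\le d-1$, $\deg h\le d$ (the zero polynomial is allowed and has degree $-\infty$). Writing $f(t)=\sum_{i=0}^{d-2}a_it^i$, $g(t)=\sum_{i=0}^{d-1}b_it^i$, $h(t)=\sum_{i=0}^{d}c_it^i$, the map $\eta:\mathcal A_d\to\mathbb R^{3d}$, $(f,g,h)\mapsto(a_0,\dots,a_{d-2},b_0,\dots,b_{d-1},c_0,\dots,c_d)$ is a bijection; $\mathcal A_d$ carries the metric $\rho(\phi,\psi)=\|\eta(\phi)-\eta(\psi)\|$ (Euclidean norm), so that $\eta$ is a homeomorphism, and all subsets of $\mathcal A_d$ carry the subspace topology. $\mathcal O_d$ is the set of all polynomial knots belonging to $\mathcal A_d$. *)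

theory Defs
  imports "HOL-Analysis.Analysis" "HOL-Computational_Algebra.Polynomial"
begin

type_synonym pmap = "real poly \<times> real poly \<times> real poly"

definition pcurve :: "pmap \<Rightarrow> real \<Rightarrow> real \<times> real \<times> real" where
  "pcurve \<phi> = (case \<phi> of (f, g, h) \<Rightarrow> (\<lambda>t. (poly f t, poly g t, poly h t)))"

definition A :: "nat \<Rightarrow> pmap set" where
  "A d = {(f, g, h). degree f \<le> d - 2 \<and> degree g \<le> d - 1 \<and> degree h \<le> d}"

definition rho :: "nat \<Rightarrow> pmap \<Rightarrow> pmap \<Rightarrow> real" where
  "rho d \<phi> \<psi> = (case \<phi> of (f, g, h) \<Rightarrow> case \<psi> of (f', g', h') \<Rightarrow>
     sqrt ((\<Sum>i\<le>d - 2. (coeff f i - coeff f' i)\<^sup>2)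
         + (\<Sum>i\<le>d - 1. (coeff g i - coeff g' i)\<^sup>2)
         + (\<Sum>i\<le>d. (coeff h i - coeff h' i)\<^sup>2)))"

definition A_top :: "nat \<Rightarrow> pmap topology" where
  "A_top d = Metric_space.mtopology (A d) (rho d)"

definition poly_knot :: "pmap \<Rightarrow> bool" where
  "poly_knot \<phi> \<longleftrightarrow> inj (pcurve \<phi>) \<and>
     (case \<phi> of (f, g, h) \<Rightarrow>
        (\<forall>t. (poly (pderiv f) t, poly (pderiv g) t, poly (pderiv h) t) \<noteq> (0, 0, 0)))"

definition Ospace :: "nat \<Rightarrow> pmap set" where
  "Ospace d = {\<phi> \<in> A d. poly_knot \<phi>}"

end

theory Submission
  imports Defs
begin

text \<open>The map sending a knot \<phi> to the unit vector \<phi>'(0)/|\<phi>'(0)| goes from O_d to S^2,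
and u \<mapsto> (t \<mapsto> t u) is a section of it (linear knots lie in A_d because d \<ge> 3).
The other composite is homotopic to the identity through
\<phi>_s(t) = (\<mu>/s)(\<phi>(st) - \<phi>(0)) + s \<phi>(0) with \<mu> = s + (1 - s)/|\<phi>'(0)|:
for s > 0 this is a reparametrised, rescaled and translated copy of \<phi>, hence a knot, and in
terms of coefficients it extends continuously to s = 0 by the linear knot t \<mapsto> t \<phi>'(0)/|\<phi>'(0)|.
Continuity in the metric of A_d is checked coefficientwise.\<close>

definition L2_dist :: "('a \<Rightarrow> 'i \<Rightarrow> real) \<Rightarrow> 'i set \<Rightarrow> 'a \<Rightarrow> 'a \<Rightarrow> real" where
  "L2_dist c I x y = L2_set (\<lambda>j. c x j - c y j) I"

lemma Metric_space_L2_dist: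
  assumes "finite I"
    and coords_determine: "\<And>x y. x \<in> S \<Longrightarrow> y \<in> S \<Longrightarrow> \<forall>j\<in>I. c x j = c y j \<Longrightarrow> x = y"
  shows "Metric_space S (L2_dist c I)"
proof
  fix x y z
  show "0 \<le> L2_dist c I x y"
    by (simp add: L2_dist_def)
  show "L2_dist c I x y = L2_dist c I y x"
    unfolding L2_dist_def L2_set_def by (simp add: power2_commute)
  show "x \<in> S \<Longrightarrow> y \<in> S \<Longrightarrow> L2_dist c I x y = 0 \<longleftrightarrow> x = y"
    unfolding L2_dist_def L2_set_eq_0_iff[OF \<open>finite I\<close>] using coords_determine by auto
  show "L2_dist c I x z \<le> L2_dist c I x y + L2_dist c I y z"
    unfolding L2_dist_def
    using L2_set_triangle_ineq[of "\<lambda>j. c x j - c y j" "\<lambda>j. c y j - c z j" I] by simp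
qed

lemma continuous_map_L2_dist_coord:
  assumes "Metric_space S (L2_dist c I)" "finite I" "j \<in> I"
  shows "continuous_map (Metric_space.mtopology S (L2_dist c I)) euclideanreal (\<lambda>x. c x j)"
  unfolding Metric_space.continuous_map_from_metric[OF assms(1)]
proof (intro conjI ballI allI impI)
  fix a U assume "openin euclideanreal U \<and> c a j \<in> U"
  then obtain e where "e > 0" and e: "\<And>y. \<bar>y - c a j\<bar> < e \<Longrightarrow> y \<in> U"
    by (metis open_openin open_real)
  have "\<bar>c x j - c a j\<bar> \<le> L2_dist c I a x" for x
    using member_le_L2_set[OF assms(2,3), of "\<lambda>j. \<bar>c a j - c x j\<bar>"]
    by (simp add: L2_dist_def L2_set_def abs_minus_commute)
  then show "\<exists>r>0. \<forall>x. x \<in> S \<and> L2_dist c I a x < r \<longrightarrow> c x j \<in> U"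
    using \<open>e > 0\<close> e by (meson le_less_trans)
qed auto

lemma continuous_map_into_L2_dist:
  assumes "Metric_space S (L2_dist c I)" "finite I"
    and "F \<in> topspace X \<rightarrow> S"
    and "\<And>j. j \<in> I \<Longrightarrow> continuous_map X euclideanreal (\<lambda>x. c (F x) j)"
  shows "continuous_map X (Metric_space.mtopology S (L2_dist c I)) F"
  unfolding Metric_space.continuous_map_to_metric[OF assms(1)]
proof (intro ballI allI impI)
  fix x and e :: real
  assume x: "x \<in> topspace X" and "e > 0"
  define U where "U = {y \<in> topspace X. L2_dist c I (F x) (F y) \<in> {..<e}}"
  have "continuous_map X euclideanreal (\<lambda>y. L2_dist c I (F x) (F y))"
    unfolding L2_dist_def L2_set_def by (intro continuous_intros assms(2,4))
  then have "openin X U"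
    unfolding U_def by (rule openin_continuous_map_preimage) simp
  moreover have "x \<in> U"
    using x \<open>e > 0\<close> by (simp add: U_def L2_dist_def L2_set_def)
  moreover have "\<forall>y\<in>U. F y \<in> Metric_space.mball S (L2_dist c I) (F x) e"
    using assms(3) x by (auto simp: U_def Metric_space.in_mball[OF assms(1)])
  ultimately show "\<exists>U. openin X U \<and> x \<in> U \<and> (\<forall>y\<in>U. F y \<in> Metric_space.mball S (L2_dist c I) (F x) e)"
    by blast
qed

definition eta :: "pmap \<Rightarrow> nat \<times> nat \<Rightarrow> real" where
  "eta \<phi> = (\<lambda>(k, i). if k = 0 then coeff (fst \<phi>) i else if k = 1 then coeff (fst (snd \<phi>)) i
                    else if k = 2 then coeff (snd (snd \<phi>)) i else 0)"

definition eta_index :: "nat \<Rightarrow> (nat \<times> nat) set" where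
  "eta_index d = Pair 0 ` {..d - 2} \<union> Pair 1 ` {..d - 1} \<union> Pair 2 ` {..d}"

lemma finite_eta_index: "finite (eta_index d)"
  by (simp add: eta_index_def)

lemma rho_eq_L2_dist: "rho d = L2_dist eta (eta_index d)"
proof (intro ext)
  fix \<phi> \<psi> :: pmap
  obtain f g h f' g' h' where fgh: "\<phi> = (f, g, h)" "\<psi> = (f', g', h')"
    by (cases \<phi>, cases \<psi>) auto
  have disjoint: "(Pair 0 ` {..d - 2} \<union> Pair 1 ` {..d - 1}) \<inter> Pair (2::nat) ` {..d} = {}"
    "Pair (0::nat) ` {..d - 2} \<inter> Pair 1 ` {..d - 1} = {}"
    by auto
  have "(\<Sum>j\<in>eta_index d. (eta \<phi> j - eta \<psi> j)\<^sup>2) =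
          (\<Sum>i\<le>d - 2. (coeff f i - coeff f' i)\<^sup>2) + (\<Sum>i\<le>d - 1. (coeff g i - coeff g' i)\<^sup>2)
        + (\<Sum>i\<le>d. (coeff h i - coeff h' i)\<^sup>2)"
    unfolding eta_index_def
    by (simp only: sum.union_disjoint[OF _ _ disjoint(1)] sum.union_disjoint[OF _ _ disjoint(2)]
        finite_UnI finite_imageI finite_atMost) (simp add: sum.reindex inj_on_def eta_def fgh)
  then show "rho d \<phi> \<psi> = L2_dist eta (eta_index d) \<phi> \<psi>"
    by (simp add: rho_def L2_dist_def L2_set_def fgh)
qed

lemma mem_eta_index:
  "(k, i) \<in> eta_index d \<longleftrightarrow> k = 0 \<and> i \<le> d - 2 \<or> k = 1 \<and> i \<le> d - 1 \<or> k = 2 \<and> i \<le> d"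
  by (auto simp: eta_index_def)

lemma eta_outside_index:
  assumes "\<phi> \<in> A d" "j \<notin> eta_index d"
  shows "eta \<phi> j = 0"
proof -
  obtain f g h k i where "\<phi> = (f, g, h)" "j = (k, i)"
    by (cases \<phi>, cases j) auto
  with assms show ?thesis
    by (auto simp: A_def eta_def mem_eta_index intro!: coeff_eq_0)
qed

lemma A_eq_if_eta_eq:
  assumes "\<phi> \<in> A d" "\<psi> \<in> A d" "\<forall>j\<in>eta_index d. eta \<phi> j = eta \<psi> j"
  shows "\<phi> = \<psi>"
proof -
  have "eta \<phi> j = eta \<psi> j" for j
    using assms eta_outside_index by (cases "j \<in> eta_index d") auto
  from this[of "(0, _)"] this[of "(1, _)"] this[of "(2, _)"]
  have "fst \<phi> = fst \<psi>" "fst (snd \<phi>) = fst (snd \<psi>)" "snd (snd \<phi>) = snd (snd \<psi>)"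
    by (auto intro: poly_eqI simp: eta_def)
  then show ?thesis
    by (simp add: prod_eq_iff)
qed

lemma Metric_space_A: "Metric_space (A d) (rho d)"
  unfolding rho_eq_L2_dist
  using finite_eta_index A_eq_if_eta_eq by (rule Metric_space_L2_dist)

lemma topspace_A_top [simp]: "topspace (A_top d) = A d"
  by (simp add: A_top_def Metric_space.topspace_mtopology[OF Metric_space_A])

lemma continuous_map_eta: "continuous_map (A_top d) euclideanreal (\<lambda>\<phi>. eta \<phi> j)"
proof (cases "j \<in> eta_index d")
  case True
  then show ?thesis
    using continuous_map_L2_dist_coord[OF Metric_space_A[unfolded rho_eq_L2_dist] finite_eta_index]
    by (simp add: A_top_def rho_eq_L2_dist)
next
  case False
  show ?thesis
    by (rule continuous_map_eq[where f = "\<lambda>_. 0"]) (simp_all add: eta_outside_index False)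
qed

lemma continuous_map_coeff_A_top:
  assumes "continuous_map X (A_top d) F"
  shows "continuous_map X euclideanreal (\<lambda>x. coeff (fst (F x)) i)"
    and "continuous_map X euclideanreal (\<lambda>x. coeff (fst (snd (F x))) i)"
    and "continuous_map X euclideanreal (\<lambda>x. coeff (snd (snd (F x))) i)"
  using continuous_map_compose[OF assms continuous_map_eta[of d "(0, i)"]]
    continuous_map_compose[OF assms continuous_map_eta[of d "(1, i)"]]
    continuous_map_compose[OF assms continuous_map_eta[of d "(2, i)"]]
  by (simp_all add: eta_def o_def)

lemma continuous_map_into_A_top:
  assumes "F \<in> topspace X \<rightarrow> A d"
    and "\<And>i. continuous_map X euclideanreal (\<lambda>x. coeff (fst (F x)) i)"
    and "\<And>i. continuous_map X euclideanreal (\<lambda>x. coeff (fst (snd (F x))) i)"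
    and "\<And>i. continuous_map X euclideanreal (\<lambda>x. coeff (snd (snd (F x))) i)"
  shows "continuous_map X (A_top d) F"
  unfolding A_top_def rho_eq_L2_dist
  using Metric_space_A[of d, unfolded rho_eq_L2_dist] finite_eta_index assms(1)
proof (rule continuous_map_into_L2_dist)
  show "continuous_map X euclideanreal (\<lambda>x. eta (F x) j)" for j
    using assms(2-4) by (cases j) (simp add: eta_def)
qed

definition scale_coeffs :: "(nat \<Rightarrow> 'a::comm_semiring_0) \<Rightarrow> 'a poly \<Rightarrow> 'a poly" where
  "scale_coeffs w p = (\<Sum>i\<le>degree p. monom (w i * coeff p i) i)"

lemma coeff_scale_coeffs [simp]: "coeff (scale_coeffs w p) n = w n * coeff p n"
  by (auto simp: scale_coeffs_def coeff_sum coeff_monom coeff_eq_0 not_le)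

lemma degree_scale_coeffs_le: "degree (scale_coeffs w p) \<le> degree p"
  by (rule degree_le) (simp add: coeff_eq_0)

lemma pderiv_scale_coeffs:
  "pderiv (scale_coeffs w p) = scale_coeffs (\<lambda>i. w (Suc i)) (pderiv p)"
  by (rule poly_eqI) (simp add: coeff_pderiv mult_ac)

lemma poly_scale_coeffs_power:
  fixes p :: "'a::comm_semiring_1 poly"
  shows "poly (scale_coeffs (\<lambda>i. c * s ^ i) p) t = c * poly p (s * t)"
  by (simp add: scale_coeffs_def poly_sum poly_monom poly_altdef[of p "s * t"] sum_distrib_left
      power_mult_distrib mult_ac)

definition rescale :: "'a::comm_semiring_1 \<Rightarrow> 'a \<Rightarrow> 'a poly \<Rightarrow> 'a poly" where
  "rescale s \<mu> = scale_coeffs (\<lambda>i. if i = 0 then s else \<mu> * s ^ (i - 1))"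

lemma degree_rescale_le: "degree (rescale s \<mu> p) \<le> degree p"
  by (simp add: rescale_def degree_scale_coeffs_le)

lemma coeff_rescale: "coeff (rescale s \<mu> p) i = (if i = 0 then s else \<mu> * s ^ (i - 1)) * coeff p i"
  by (simp add: rescale_def)

lemma poly_rescale:
  fixes p :: "'a::field poly"
  assumes "s \<noteq> 0"
  shows "poly (rescale s \<mu> p) t = \<mu> / s * (poly p (s * t) - poly p 0) + s * poly p 0"
proof -
  have "rescale s \<mu> p = scale_coeffs (\<lambda>i. \<mu> / s * s ^ i) p + [:(s - \<mu> / s) * coeff p 0:]"
    using assms by (intro poly_eqI) (auto simp: rescale_def coeff_pCons algebra_simps split: nat.split)
  then have "poly (rescale s \<mu> p) t = \<mu> / s * poly p (s * t) + (s - \<mu> / s) * coeff p 0"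
    by (simp only: poly_add poly_scale_coeffs_power) simp
  then show ?thesis
    by (simp add: poly_0_coeff_0 algebra_simps)
qed

lemma pderiv_rescale: "pderiv (rescale s \<mu> p) = scale_coeffs (\<lambda>i. \<mu> * s ^ i) (pderiv p)"
  by (simp add: rescale_def pderiv_scale_coeffs)

lemma rescale_0: "rescale 0 \<mu> p = [:0, \<mu> * coeff p 1:]"
  by (rule poly_eqI) (auto simp: rescale_def coeff_pCons split: nat.split)

lemma rescale_1_1: "rescale 1 1 p = p"
  by (rule poly_eqI) (simp add: rescale_def)

definition map_pmap :: "(real poly \<Rightarrow> real poly) \<Rightarrow> pmap \<Rightarrow> pmap" where
  "map_pmap F = map_prod F (map_prod F F)"

definition initial_velocity :: "pmap \<Rightarrow> real \<times> real \<times> real" where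
  "initial_velocity \<phi> = (coeff (fst \<phi>) 1, coeff (fst (snd \<phi>)) 1, coeff (snd (snd \<phi>)) 1)"

definition linear_pmap :: "real \<times> real \<times> real \<Rightarrow> pmap" where
  "linear_pmap u = ([:0, fst u:], [:0, fst (snd u):], [:0, snd (snd u):])"

lemma initial_velocity_nonzero:
  assumes "poly_knot \<phi>"
  shows "initial_velocity \<phi> \<noteq> 0"
proof -
  obtain f g h where \<phi>: "\<phi> = (f, g, h)"
    by (cases \<phi>) auto
  have "(poly (pderiv f) 0, poly (pderiv g) 0, poly (pderiv h) 0) \<noteq> (0, 0, 0)"
    using assms by (simp add: poly_knot_def \<phi>)
  then show ?thesis
    by (simp add: initial_velocity_def poly_0_coeff_0 coeff_pderiv zero_prod_def \<phi>)
qed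

lemma initial_velocity_linear_pmap [simp]: "initial_velocity (linear_pmap u) = u"
  by (simp add: initial_velocity_def linear_pmap_def)

lemma pcurve_linear_pmap: "pcurve (linear_pmap u) t = t *\<^sub>R u"
  by (cases u) (simp add: pcurve_def linear_pmap_def)

lemma poly_knot_linear_pmap: "poly_knot (linear_pmap u) \<longleftrightarrow> u \<noteq> 0"
proof
  assume "poly_knot (linear_pmap u)"
  then show "u \<noteq> 0"
    using initial_velocity_nonzero by fastforce
next
  assume "u \<noteq> 0"
  then have "inj (pcurve (linear_pmap u))"
    by (auto simp: inj_def pcurve_linear_pmap)
  with \<open>u \<noteq> 0\<close> show "poly_knot (linear_pmap u)"
    by (cases u) (simp add: poly_knot_def linear_pmap_def pderiv_pCons zero_prod_def)
qed

lemma map_pmap_rescale_0: "map_pmap (rescale 0 \<mu>) \<phi> = linear_pmap (\<mu> *\<^sub>R initial_velocity \<phi>)"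
  by (cases \<phi>) (simp add: map_pmap_def rescale_0 linear_pmap_def initial_velocity_def)

lemma pcurve_map_pmap_rescale:
  assumes "s \<noteq> 0"
  shows "pcurve (map_pmap (rescale s \<mu>) \<phi>) t
           = (\<mu> / s) *\<^sub>R (pcurve \<phi> (s * t) - pcurve \<phi> 0) + s *\<^sub>R pcurve \<phi> 0"
  using assms by (cases \<phi>) (simp add: pcurve_def map_pmap_def poly_rescale)

lemma poly_knot_rescale:
  assumes knot: "poly_knot \<phi>" and "0 \<le> s" "0 < \<mu>"
  shows "poly_knot (map_pmap (rescale s \<mu>) \<phi>)"
proof (cases "s = 0")
  case True
  then show ?thesis
    using initial_velocity_nonzero[OF knot] \<open>0 < \<mu>\<close>
    by (simp add: map_pmap_rescale_0 poly_knot_linear_pmap)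
next
  case False
  obtain f g h where \<phi>: "\<phi> = (f, g, h)"
    by (cases \<phi>) auto
  have "inj (pcurve (map_pmap (rescale s \<mu>) \<phi>))"
  proof (rule injI)
    fix x y
    assume "pcurve (map_pmap (rescale s \<mu>) \<phi>) x = pcurve (map_pmap (rescale s \<mu>) \<phi>) y"
    then have "pcurve \<phi> (s * x) = pcurve \<phi> (s * y)"
      using False \<open>0 < \<mu>\<close> by (simp add: pcurve_map_pmap_rescale)
    then show "x = y"
      using knot False by (auto simp: poly_knot_def dest: injD)
  qed
  moreover have "poly (pderiv (rescale s \<mu> p)) t = \<mu> * poly (pderiv p) (s * t)" for p :: "real poly" and t
    by (simp add: pderiv_rescale poly_scale_coeffs_power)
  ultimately show ?thesis
    using knot \<open>0 < \<mu>\<close> by (simp add: poly_knot_def map_pmap_def \<phi>)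
qed

lemma continuous_map_initial_velocity:
  assumes "continuous_map X (A_top d) F"
  shows "continuous_map X euclidean (\<lambda>x. initial_velocity (F x))"
  using continuous_map_coeff_A_top[OF assms]
  by (simp add: initial_velocity_def continuous_map_pairedI flip: prod_topology_euclidean)

lemma initial_velocity_Ospace_nonzero: "\<phi> \<in> Ospace d \<Longrightarrow> initial_velocity \<phi> \<noteq> 0"
  by (simp add: Ospace_def initial_velocity_nonzero)

definition unit_initial_velocity :: "pmap \<Rightarrow> real \<times> real \<times> real" where
  "unit_initial_velocity \<phi> = sgn (initial_velocity \<phi>)"

lemma continuous_map_unit_initial_velocity:
  "continuous_map (subtopology (A_top d) (Ospace d)) (top_of_set (sphere 0 1)) unit_initial_velocity"
proof -
  have velocity: "continuous_map (subtopology (A_top d) (Ospace d)) (top_of_set (- {0})) initial_velocity"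
    using continuous_map_initial_velocity[of _ d id] initial_velocity_Ospace_nonzero
    by (auto simp: continuous_map_in_subtopology continuous_map_from_subtopology)
  have sgn: "continuous_map (top_of_set (- {0})) (top_of_set (sphere 0 1))
                   (sgn :: real \<times> real \<times> real \<Rightarrow> _)"
    by (auto simp: continuous_map_in_subtopology norm_sgn intro!: continuous_on_sgn continuous_on_id)
  show ?thesis
    using continuous_map_compose[OF velocity sgn] by (simp add: unit_initial_velocity_def[abs_def] o_def)
qed

lemma linear_pmap_in_Ospace:
  assumes "d \<ge> 3" "u \<noteq> 0"
  shows "linear_pmap u \<in> Ospace d"
proof -
  have "degree [:0, a:] \<le> d - 2" for a :: real
    using assms(1) degree_pCons_le[of 0 "[:a:]"] by simp
  then have "linear_pmap u \<in> A d"
    using assms(1) by (auto simp: A_def linear_pmap_def intro: order_trans)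
  then show ?thesis
    using assms(2) by (simp add: Ospace_def poly_knot_linear_pmap)
qed

lemma continuous_map_linear_pmap:
  assumes "d \<ge> 3"
  shows "continuous_map (top_of_set (sphere 0 1)) (subtopology (A_top d) (Ospace d)) linear_pmap"
proof -
  have coeff_linear: "coeff [:0, a:] i = (if i = 1 then a else 0)" for a :: real and i
    by (cases i) (simp_all add: coeff_pCons split: nat.split)
  have in_Ospace: "linear_pmap u \<in> Ospace d" if "u \<in> sphere 0 1" for u
    using linear_pmap_in_Ospace[OF assms, of u] that by (cases "u = 0") auto
  then have "continuous_map (top_of_set (sphere 0 1)) (A_top d) linear_pmap"
    unfolding Ospace_def
    by (intro continuous_map_into_A_top) (auto simp: linear_pmap_def coeff_linear intro!: continuous_intros)
  then show ?thesis
    using in_Ospace by (auto simp: continuous_map_in_subtopology)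
qed

lemma unit_initial_velocity_linear_pmap: "norm u = 1 \<Longrightarrow> unit_initial_velocity (linear_pmap u) = u"
  by (simp add: unit_initial_velocity_def sgn_div_norm)

definition straighten :: "real \<Rightarrow> pmap \<Rightarrow> pmap" where
  "straighten s \<phi> = map_pmap (rescale s (s + (1 - s) / norm (initial_velocity \<phi>))) \<phi>"

lemma straighten_0: "straighten 0 \<phi> = linear_pmap (unit_initial_velocity \<phi>)"
  by (simp add: straighten_def map_pmap_rescale_0 unit_initial_velocity_def sgn_div_norm
      divide_inverse_commute)

lemma straighten_1: "straighten 1 \<phi> = \<phi>"
  by (cases \<phi>) (simp add: straighten_def rescale_1_1 map_pmap_def)

lemma straighten_in_Ospace:
  assumes "\<phi> \<in> Ospace d" "s \<in> {0..1}"
  shows "straighten s \<phi> \<in> Ospace d"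
proof -
  have "s + (1 - s) / norm (initial_velocity \<phi>) > 0"
    using assms initial_velocity_Ospace_nonzero[OF assms(1)]
    by (cases "s = 1") (auto intro: add_nonneg_pos add_pos_nonneg)
  then have "poly_knot (straighten s \<phi>)"
    using assms by (simp add: straighten_def Ospace_def poly_knot_rescale)
  moreover have "straighten s \<phi> \<in> A d"
    using assms(1) degree_rescale_le unfolding Ospace_def straighten_def
    by (cases \<phi>) (auto simp: A_def map_pmap_def intro: order_trans)
  ultimately show ?thesis
    by (simp add: Ospace_def)
qed

lemma continuous_map_straighten:
  "continuous_map (prod_topology (top_of_set {0..1}) (subtopology (A_top d) (Ospace d)))
     (subtopology (A_top d) (Ospace d)) (\<lambda>x. straighten (fst x) (snd x))"
  (is "continuous_map ?P _ _")
proof -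
  have snd: "continuous_map ?P (A_top d) snd"
    by (rule continuous_map_into_fulltopology[OF continuous_map_snd])
  have fst: "continuous_map ?P euclideanreal fst"
    by (rule continuous_map_into_fulltopology[OF continuous_map_fst])
  have "continuous_map ?P euclideanreal (\<lambda>x. fst x + (1 - fst x) / norm (initial_velocity (snd x)))"
    using fst continuous_map_initial_velocity[OF snd] initial_velocity_Ospace_nonzero
    by (auto intro!: continuous_intros)
  then have "continuous_map ?P euclideanreal (\<lambda>x. if i = 0 then fst x
               else (fst x + (1 - fst x) / norm (initial_velocity (snd x))) * fst x ^ (i - 1))" for i
    using fst by (cases "i = 0") (auto intro!: continuous_intros)
  then have "continuous_map ?P (A_top d) (\<lambda>x. straighten (fst x) (snd x))"
    using straighten_in_Ospace continuous_map_coeff_A_top[OF snd] unfolding Ospace_def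
    by (intro continuous_map_into_A_top)
      (auto simp: straighten_def map_pmap_def coeff_rescale intro!: continuous_map_real_mult)
  then show ?thesis
    using straighten_in_Ospace by (auto simp: continuous_map_in_subtopology)
qed

lemma homotopic_linear_pmap_unit_initial_velocity:
  "homotopic_with (\<lambda>_. True) (subtopology (A_top d) (Ospace d)) (subtopology (A_top d) (Ospace d))
     (linear_pmap \<circ> unit_initial_velocity) id"
  unfolding homotopic_with_def
  by (intro exI[where x = "\<lambda>x. straighten (fst x) (snd x)"])
    (simp add: continuous_map_straighten straighten_0 straighten_1)

theorem mainTheorem1:
  fixes d :: nat
  assumes "d \<ge> 3"
  shows "(subtopology (A_top d) (Ospace d)) homotopy_equivalent_space
           (top_of_set (sphere (0 :: real \<times> real \<times> real) 1))"
  unfolding homotopy_equivalent_space_def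
proof (intro exI conjI)
  show "homotopic_with (\<lambda>_. True) (top_of_set (sphere 0 1)) (top_of_set (sphere 0 1))
          (unit_initial_velocity \<circ> linear_pmap) id"
    using continuous_map_compose[OF continuous_map_linear_pmap[OF assms]
        continuous_map_unit_initial_velocity]
    by (rule homotopic_with_equal[rotated 2]) (simp_all add: unit_initial_velocity_linear_pmap)
qed (use continuous_map_unit_initial_velocity continuous_map_linear_pmap[OF assms]
       homotopic_linear_pmap_unit_initial_velocity in auto)

end
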